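(* Let $\Phi$ be a (possibly infinite) NCIFS on $X\subset\mathbb R^d$ with bounded distortion constant $K$, and let $t\in[0,d]$. Assume that $\sum_{j\in I^{(n)}}\|D\phi^{(n)}_j\|^t<\infty$ for all $n$. Let $\delta>0$, and for each $n$ let $I^{(n)}_f\subset I^{(n)}$ be a finite set such that \[\sum_{j\in I^{(n)}}\|D\phi^{(n)}_j\|^t\le(1+\delta)\sum_{j\in I^{(n)}_f}\|D\phi^{(n)}_j\|^t\] for all sufficiently large $n$. Let $\Phi_f$ be the system with $\Phi_f^{(n)}=(\phi^{(n)}_j)_{j\in I^{(n)}_f}$. Then $\underline P^{\Phi_f}(t)\ge\underline P^{\Phi}(t)-\delta K^{2d}$.
   Context: Fix $d\in\mathbb N$ and a compact set $X\subset\mathbb R^d$ equal to the closure of its interior, such that $\partial X$ is smooth or $X$ is convex. $\|D\phi\|:=\sup_{x\in X}|\phi'(x)|$ for a conformal map $\phi$. An NCIFS $\Phi$ on $X$ is a sequence $\Phi^{(j)}=(\phi^{(j)}_i:X\to X)_{i\in I^{(j)}}$, $j\ge1$, of families indexed by finite or countably infinite sets, satisfying: - (open set condition) images of $\operatorname{int}X$ under distinct maps of the same $\Phi^{(j)}$ are disjoint; - (conformality) there is an open connected $V\supset X$ such that all maps extend to $C^1$ conformal diffeomorphisms of $V$ into $V$; - (bounded distortion) there is $K\ge1$ with $|\phi'(x)|\le K|\phi'(y)|$ for $x,y\in V$ and every composition $\phi=\phi^{(k)}_{\omega_k}\circ\cdots\circ\phi^{(l)}_{\omega_l}$, $k\le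 l$, $\omega_j\in I^{(j)}$; - (uniform contraction) $\|D\phi^{(j)}_i\|\le\eta<1$ for all $i,j$. For $\omega\in I^n=\prod_{j\le n}I^{(j)}$ let $\phi_\omega=\phi^{(1)}_{\omega_1}\circ\cdots\circ\phi^{(n)}_{\omega_n}$. For a system $\Psi$ of this kind, $Z^\Psi_n(t)=\sum_{\omega\in I^n}\|D\phi_\omega\|^t$ (computed with the index sets of $\Psi$), and the lower pressure is $\underline P^\Psi(t)=\liminf_{n\to\infty}\frac1n\log Z^\Psi_n(t)$. *)

theory Defs
  imports "HOL-Analysis.Analysis"
begin

definition dnorm :: "('a::euclidean_space \<Rightarrow> 'a) \<Rightarrow> 'a \<Rightarrow> real" where
  "dnorm f x = onorm (frechet_derivative f (at x))"

definition Dnorm :: "'a::euclidean_space set \<Rightarrow> ('a \<Rightarrow> 'a) \<Rightarrow> real" where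
  "Dnorm X f = (SUP x\<in>X. dnorm f x)"

text \<open>C-infinity real functions on an open set: continuous, differentiable, and all
  directional derivatives again smooth.\<close>
coinductive smooth_on :: "'a::euclidean_space set \<Rightarrow> ('a \<Rightarrow> real) \<Rightarrow> bool" for U where
  "continuous_on U g \<Longrightarrow> (\<forall>x\<in>U. g differentiable at x) \<Longrightarrow>
   (\<forall>v. smooth_on U (\<lambda>x. frechet_derivative g (at x) v)) \<Longrightarrow> smooth_on U g"

definition smooth_boundary :: "'a::euclidean_space set \<Rightarrow> bool" where
  "smooth_boundary X \<longleftrightarrow>
     (\<forall>p\<in>frontier X. \<exists>U g. open U \<and> p \<in> U \<and> smooth_on U g \<and>
        frechet_derivative g (at p) \<noteq> (\<lambda>v. 0) \<and> X \<inter> U = {x\<in>U. g x \<le> 0})"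

definition conformal_C1_diffeo :: "'a::euclidean_space set \<Rightarrow> ('a \<Rightarrow> 'a) \<Rightarrow> bool" where
  "conformal_C1_diffeo V f \<longleftrightarrow>
     inj_on f V \<and> f ` V \<subseteq> V \<and> open (f ` V) \<and>
     (\<forall>x\<in>V. f differentiable at x) \<and>
     (\<forall>v. continuous_on V (\<lambda>x. frechet_derivative f (at x) v)) \<and>
     (\<forall>x\<in>V. \<exists>c>0. \<forall>v. norm (frechet_derivative f (at x) v) = c * norm v) \<and>
     (\<exists>g. (\<forall>x\<in>V. g (f x) = x) \<and> (\<forall>y\<in>f ` V. g differentiable at y))"

fun cs :: "(nat \<Rightarrow> nat \<Rightarrow> 'a \<Rightarrow> 'a) \<Rightarrow> (nat \<Rightarrow> nat) \<Rightarrow> nat \<Rightarrow> nat \<Rightarrow> 'a \<Rightarrow> 'a" where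
  "cs \<phi> \<omega> k 0 = id"
| "cs \<phi> \<omega> k (Suc m) = \<phi> k (\<omega> k) \<circ> cs \<phi> \<omega> (Suc k) m"

definition words :: "(nat \<Rightarrow> nat set) \<Rightarrow> nat \<Rightarrow> (nat \<Rightarrow> nat) set" where
  "words I n = Pi\<^sub>E {1..n} I"

definition NCIFS :: "'a::euclidean_space set \<Rightarrow> (nat \<Rightarrow> nat set) \<Rightarrow> (nat \<Rightarrow> nat \<Rightarrow> 'a \<Rightarrow> 'a) \<Rightarrow> real \<Rightarrow> bool" where
  "NCIFS X I \<phi> K \<longleftrightarrow>
     compact X \<and> X \<noteq> {} \<and> X = closure (interior X) \<and> (convex X \<or> smooth_boundary X) \<and>
     (\<forall>j\<ge>1. I j \<noteq> {}) \<and>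
     (\<forall>j\<ge>1. \<forall>i\<in>I j. \<phi> j i ` X \<subseteq> X) \<and>
     (\<forall>j\<ge>1. \<forall>i\<in>I j. \<forall>i'\<in>I j. i \<noteq> i' \<longrightarrow> \<phi> j i ` interior X \<inter> \<phi> j i' ` interior X = {}) \<and>
     (\<exists>V. open V \<and> connected V \<and> X \<subseteq> V \<and>
        (\<forall>j\<ge>1. \<forall>i\<in>I j. conformal_C1_diffeo V (\<phi> j i)) \<and>
        K \<ge> 1 \<and>
        (\<forall>\<omega> k m x y. 1 \<le> k \<longrightarrow> 1 \<le> m \<longrightarrow> (\<forall>l\<in>{k..<k+m}. \<omega> l \<in> I l) \<longrightarrow>
            x \<in> V \<longrightarrow> y \<in> V \<longrightarrow> dnorm (cs \<phi> \<omega> k m) x \<le> K * dnorm (cs \<phi> \<omega> k m) y)) \<and>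
     (\<exists>\<eta><1. \<forall>j\<ge>1. \<forall>i\<in>I j. Dnorm X (\<phi> j i) \<le> \<eta>)"

definition Zn :: "'a::euclidean_space set \<Rightarrow> (nat \<Rightarrow> nat set) \<Rightarrow> (nat \<Rightarrow> nat \<Rightarrow> 'a \<Rightarrow> 'a) \<Rightarrow> real \<Rightarrow> nat \<Rightarrow> ennreal" where
  "Zn X I \<phi> t n = (\<Sum>\<^sub>\<infinity>\<omega>\<in>words I n. ennreal (Dnorm X (cs \<phi> \<omega> 1 n) powr t))"

definition eln :: "ennreal \<Rightarrow> ereal" where
  "eln z = (if z = 0 then -\<infinity> else if z = \<infinity> then \<infinity> else ereal (ln (enn2real z)))"

definition lower_pressure :: "'a::euclidean_space set \<Rightarrow> (nat \<Rightarrow> nat set) \<Rightarrow> (nat \<Rightarrow> nat \<Rightarrow> 'a \<Rightarrow> 'a) \<Rightarrow> real \<Rightarrow> ereal" where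
  "lower_pressure X I \<phi> t = liminf (\<lambda>n. eln (Zn X I \<phi> t n) / ereal (real n))"

end

theory Submission
  imports Defs
begin

(* Pass from Phi to Phi_f one level at a time.  Let f_k and e_k be the sums of
   ||D phi^(k)_i||^t over I_f^(k) and over its complement.  Bounded distortion gives
   ||D phi_w|| ||D phi^(k)_i|| <= K^2 ||D phi^(k)_(w_k)|| ||D phi_w'||, where w' is w with its
   k-th letter replaced by i; summing over i in I_f^(k), every word whose k-th letter lies
   outside I_f^(k) is dominated by words with a good k-th letter.  Hence restricting level k
   multiplies Z_n by at most 1 + K^(2t) e_k / f_k, and
     Z_n(Phi) <= prod_(k<=n) (1 + K^(2t) e_k / f_k) * Z_n(Phi_f).
   Eventually e_k <= delta f_k, so the product grows at most like C (1 + K^(2t) delta)^n,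
   and ln (1 + K^(2t) delta) <= K^(2t) delta <= delta K^(2d). *)

definition conformal_at :: "('a::euclidean_space \<Rightarrow> 'a) \<Rightarrow> 'a \<Rightarrow> real \<Rightarrow> bool" where
  "conformal_at f x c \<longleftrightarrow>
     f differentiable at x \<and> (\<forall>v. norm (frechet_derivative f (at x) v) = c * norm v)"

lemma conformal_at_compose:
  assumes "conformal_at g x c" "conformal_at f (g x) c'"
  shows "conformal_at (f \<circ> g) x (c' * c)"
  using assms unfolding conformal_at_def
  by (simp add: differentiable_chain_at frechet_derivative_compose mult.assoc)

lemma conformal_at_id: "conformal_at id x 1"
  unfolding conformal_at_def by (simp add: id_def)

lemma dnorm_conformal_at:
  assumes "conformal_at f x c"
  shows "dnorm f x = c"
proof -
  let ?L = "frechet_derivative f (at x)"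
  have L: "\<And>v. norm (?L v) = c * norm v" and "bounded_linear ?L"
    using assms frechet_derivative_works has_derivative_bounded_linear
    unfolding conformal_at_def by blast+
  obtain b :: 'a where b: "b \<in> Basis" using nonempty_Basis by blast
  have "c \<ge> 0" using L[of b] b by (metis mult.right_neutral norm_Basis norm_ge_zero)
  then have "onorm ?L \<le> c" by (intro onorm_le) (simp add: L)
  moreover have "c \<le> onorm ?L" using onorm[OF \<open>bounded_linear ?L\<close>, of b] L[of b] b by simp
  ultimately show ?thesis unfolding dnorm_def by simp
qed

lemma dnorm_compose:
  assumes "conformal_at g x c" "conformal_at f (g x) c'"
  shows "dnorm (f \<circ> g) x = dnorm f (g x) * dnorm g x"
  using assms by (simp add: dnorm_conformal_at conformal_at_compose)

lemma cs_1 [simp]: "cs \<phi> \<omega> k 1 = \<phi> k (\<omega> k)"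
  by (simp add: One_nat_def)

lemma cs_add: "cs \<phi> \<omega> k (a + b) = cs \<phi> \<omega> k a \<circ> cs \<phi> \<omega> (k + a) b"
  by (induction a arbitrary: k) (auto simp: o_assoc)

lemma cs_cong:
  "(\<And>l. k \<le> l \<Longrightarrow> l < k + m \<Longrightarrow> \<omega> l = \<omega>' l) \<Longrightarrow> cs \<phi> \<omega> k m = cs \<phi> \<omega>' k m"
  by (induction m arbitrary: k) auto

lemma cs_fun_upd_split_at:
  assumes "k \<in> {1..n}"
  shows "cs \<phi> (fun_upd \<omega> k i) 1 n = cs \<phi> \<omega> 1 (k - 1) \<circ> \<phi> k i \<circ> cs \<phi> \<omega> (Suc k) (n - k)"
proof -
  have "n = (k - 1) + Suc (n - k)" using assms by auto
  then have "cs \<phi> (fun_upd \<omega> k i) 1 n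
      = cs \<phi> (fun_upd \<omega> k i) 1 (k - 1) \<circ> \<phi> k i \<circ> cs \<phi> (fun_upd \<omega> k i) (Suc k) (n - k)"
    using assms cs_add[of \<phi> "fun_upd \<omega> k i" 1 "k - 1" "Suc (n - k)"] by (auto simp: o_assoc)
  moreover have "cs \<phi> (fun_upd \<omega> k i) 1 (k - 1) = cs \<phi> \<omega> 1 (k - 1)"
    and "cs \<phi> (fun_upd \<omega> k i) (Suc k) (n - k) = cs \<phi> \<omega> (Suc k) (n - k)"
    using assms by (auto intro: cs_cong)
  ultimately show ?thesis by simp
qed

lemma inj_letter_swap: "inj (\<lambda>(\<omega>, i). (\<omega> k, fun_upd \<omega> k i))"
proof (rule injI, clarify)
  fix \<omega> i \<omega>' i' assume "\<omega> k = \<omega>' k" "fun_upd \<omega> k i = fun_upd \<omega>' k i'"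
  then show "\<omega> = \<omega>' \<and> i = i'"
    by (metis fun_upd_triv fun_upd_upd fun_upd_same)
qed

lemma PiE_fun_upd_restrict:
  assumes "k \<in> A" "C \<subseteq> B k"
  shows "PiE A (B(k := C)) = {\<omega> \<in> PiE A B. \<omega> k \<in> C}"
proof (intro set_eqI iffI)
  fix \<omega> assume "\<omega> \<in> PiE A (B(k := C))"
  then show "\<omega> \<in> {\<omega> \<in> PiE A B. \<omega> k \<in> C}"
    using assms by (auto simp: PiE_iff split: if_split_asm)
qed (use assms in \<open>auto simp: PiE_iff\<close>)

lemma sum_le_infsum_ennreal:
  fixes f :: "'b \<Rightarrow> ennreal"
  assumes "finite F" "F \<subseteq> A"
  shows "sum f F \<le> infsum f A"
proof -
  have "sum f F = infsum f F" using assms(1) by simp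
  also have "\<dots> \<le> infsum f A"
    by (rule infsum_mono_neutral) (use assms in \<open>auto intro: nonneg_summable_on_complete\<close>)
  finally show ?thesis .
qed

lemma infsum_ennreal_le:
  fixes f :: "'b \<Rightarrow> ennreal"
  assumes "\<And>F. finite F \<Longrightarrow> F \<subseteq> A \<Longrightarrow> sum f F \<le> c"
  shows "infsum f A \<le> c"
  unfolding nonneg_infsum_complete[of A f, OF zero_le] using assms by (intro SUP_least) auto

lemma infsum_ennreal_of_real:
  fixes f :: "'b \<Rightarrow> real"
  assumes "f summable_on A" "\<And>x. x \<in> A \<Longrightarrow> 0 \<le> f x"
  shows "(\<Sum>\<^sub>\<infinity>x\<in>A. ennreal (f x)) = ennreal (\<Sum>\<^sub>\<infinity>x\<in>A. f x)"
  using infsum_comm_additive_general[of A ennreal f] assms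
  by (simp add: o_def subset_eq)

lemma prod_le_const_mult_power:
  fixes r :: "nat \<Rightarrow> real"
  assumes ge_1: "\<And>k. 1 \<le> k \<Longrightarrow> 1 \<le> r k" and "eventually (\<lambda>k. r k \<le> q) sequentially"
  obtains C where "C > 0" "\<And>n. (\<Prod>k\<in>{1..n}. r k) \<le> C * q ^ n"
proof -
  obtain N0 where N0: "\<And>k. N0 \<le> k \<Longrightarrow> r k \<le> q"
    using assms(2) unfolding eventually_sequentially by blast
  define N where "N = max N0 1"
  have "N \<ge> 1" and N: "\<And>k. N \<le> k \<Longrightarrow> r k \<le> q" using N0 unfolding N_def by auto
  define C where "C = (\<Prod>k\<in>{1..N}. r k)"
  have "C \<ge> 1" unfolding C_def using ge_1 by (intro prod_ge_1) auto
  have "q \<ge> 1" using ge_1[OF \<open>N \<ge> 1\<close>] N[of N] by simp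
  have "(\<Prod>k\<in>{1..n}. r k) \<le> C * q ^ n" for n
  proof -
    have "(\<Prod>k\<in>{1..n}. r k) \<le> (\<Prod>k\<in>{1..N} \<union> {N<..n}. r k)"
      using ge_1 by (intro prod_mono2) (auto intro: order_trans[OF zero_le_one])
    also have "\<dots> = C * (\<Prod>k\<in>{N<..n}. r k)"
      unfolding C_def by (intro prod.union_disjoint) auto
    also have "(\<Prod>k\<in>{N<..n}. r k) \<le> q ^ n"
      using ge_1 N \<open>N \<ge> 1\<close> \<open>q \<ge> 1\<close> by (intro prod_le_power) (auto intro: order_trans[OF zero_le_one])
    finally show ?thesis using \<open>C \<ge> 1\<close> by (simp add: mult_left_mono)
  qed
  with \<open>C \<ge> 1\<close> show thesis by (intro that) auto
qed

lemma eln_mono: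
  assumes "a \<le> b"
  shows "eln a \<le> eln b"
proof (cases "a = 0 \<or> b = \<infinity>")
  case True
  then show ?thesis unfolding eln_def by auto
next
  case False
  then have "a \<noteq> \<infinity>" "b \<noteq> 0" using assms by (auto simp: top_unique)
  moreover have "0 < enn2real a" "enn2real a \<le> enn2real b"
    using False assms \<open>a \<noteq> \<infinity>\<close> by (auto simp: enn2real_positive_iff top.not_eq_extremum enn2real_mono zero_less_iff_neq_zero)
  ultimately show ?thesis using False unfolding eln_def by simp
qed

lemma eln_ennreal: "x > 0 \<Longrightarrow> eln (ennreal x) = ereal (ln x)"
  unfolding eln_def by simp

lemma liminf_eln_le_geometric:
  fixes Z :: "nat \<Rightarrow> ennreal" and w :: "nat \<Rightarrow> real"
  assumes Z_le: "\<And>n. Z n \<le> ennreal (C * q ^ n * w n)" and "C > 0" "q > 0" "\<And>n. w n > 0"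
  shows "liminf (\<lambda>n. eln (Z n) / ereal (real n))
    \<le> ereal (ln q) + liminf (\<lambda>n. eln (ennreal (w n)) / ereal (real n))"
proof -
  have "eventually (\<lambda>n. eln (Z n) / ereal (real n)
      \<le> ereal (ln C / real n + ln q) + eln (ennreal (w n)) / ereal (real n)) sequentially"
    using eventually_gt_at_top[of 0]
  proof eventually_elim
    case (elim n)
    have "eln (Z n) \<le> ereal (ln C + real n * ln q + ln (w n))"
      using eln_mono[OF Z_le[of n]] assms(2,3) assms(4)[of n]
      by (simp add: eln_ennreal ln_mult ln_realpow)
    then have "eln (Z n) / ereal (real n) \<le> ereal ((ln C + real n * ln q + ln (w n)) / real n)"
      using elim by (auto dest: ereal_divide_right_mono[where z = "ereal (real n)"])
    also have "(ln C + real n * ln q + ln (w n)) / real n = (ln C / real n + ln q) + ln (w n) / real n"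
      using elim by (simp add: field_simps)
    finally show ?case using elim assms(4)[of n] by (simp add: eln_ennreal)
  qed
  then have "liminf (\<lambda>n. eln (Z n) / ereal (real n))
      \<le> liminf (\<lambda>n. ereal (ln C / real n + ln q) + eln (ennreal (w n)) / ereal (real n))"
    by (rule Liminf_mono)
  also have "\<dots> = ereal (ln q) + liminf (\<lambda>n. eln (ennreal (w n)) / ereal (real n))"
    using tendsto_add[OF lim_const_over_n[of "ln C"] tendsto_const[of "ln q"]]
    by (intro ereal_liminf_lim_add) auto
  finally show ?thesis .
qed

locale bounded_distortion_system =
  fixes X V :: "'a::euclidean_space set" and I :: "nat \<Rightarrow> nat set"
    and \<phi> :: "nat \<Rightarrow> nat \<Rightarrow> 'a \<Rightarrow> 'a" and K :: real
  assumes X_sub_V: "X \<subseteq> V" and X_nonempty: "X \<noteq> {}"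
    and maps_X: "\<And>j i. 1 \<le> j \<Longrightarrow> i \<in> I j \<Longrightarrow> \<phi> j i ` X \<subseteq> X"
    and conformal: "\<And>j i. 1 \<le> j \<Longrightarrow> i \<in> I j \<Longrightarrow> conformal_C1_diffeo V (\<phi> j i)"
    and K_ge_1: "K \<ge> 1"
    and distortion: "\<And>\<omega> k m x y. 1 \<le> k \<Longrightarrow> 1 \<le> m \<Longrightarrow> (\<forall>l\<in>{k..<k+m}. \<omega> l \<in> I l) \<Longrightarrow>
            x \<in> V \<Longrightarrow> y \<in> V \<Longrightarrow> dnorm (cs \<phi> \<omega> k m) x \<le> K * dnorm (cs \<phi> \<omega> k m) y"

lemma NCIFS_imp_bounded_distortion_system:
  assumes "NCIFS X I \<phi> K"
  obtains V where "bounded_distortion_system X V I \<phi> K"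
  using assms unfolding NCIFS_def bounded_distortion_system_def by metis

context bounded_distortion_system
begin

lemma cs_conformal:
  assumes "1 \<le> k" "\<forall>l\<in>{k..<k+m}. \<omega> l \<in> I l" "x \<in> V"
  shows "cs \<phi> \<omega> k m x \<in> V \<and> (\<exists>c>0. conformal_at (cs \<phi> \<omega> k m) x c)"
  using assms
proof (induction m arbitrary: k)
  case 0
  have "cs \<phi> \<omega> k 0 x \<in> V" "conformal_at (cs \<phi> \<omega> k 0) x 1"
    using \<open>x \<in> V\<close> conformal_at_id by simp_all
  then show ?case using zero_less_one by blast
next
  case (Suc m)
  let ?y = "cs \<phi> \<omega> (Suc k) m x" and ?p = "\<phi> k (\<omega> k)"
  have "?y \<in> V \<and> (\<exists>c>0. conformal_at (cs \<phi> \<omega> (Suc k) m) x c)"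
    using Suc.prems by (intro Suc.IH) auto
  then obtain c where "?y \<in> V" "c > 0" and c: "conformal_at (cs \<phi> \<omega> (Suc k) m) x c"
    by blast
  moreover have "conformal_C1_diffeo V ?p" using Suc.prems by (intro conformal) auto
  ultimately obtain c' where "?p ?y \<in> V" "c' > 0" and c': "conformal_at ?p ?y c'"
    unfolding conformal_C1_diffeo_def conformal_at_def by blast
  have "conformal_at (cs \<phi> \<omega> k (Suc m)) x (c' * c)"
    using conformal_at_compose[OF c c'] by (simp only: cs.simps)
  moreover have "cs \<phi> \<omega> k (Suc m) x \<in> V" using \<open>?p ?y \<in> V\<close> by simp
  ultimately show ?case using \<open>c > 0\<close> \<open>c' > 0\<close> mult_pos_pos by blast
qed

lemma cs_maps_X:
  assumes "1 \<le> k" "\<forall>l\<in>{k..<k+m}. \<omega> l \<in> I l" "x \<in> X"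
  shows "cs \<phi> \<omega> k m x \<in> X"
  using assms
proof (induction m arbitrary: k)
  case (Suc m)
  then have "cs \<phi> \<omega> (Suc k) m x \<in> X" by auto
  with Suc.prems maps_X[of k "\<omega> k"] show ?case by auto
qed simp

lemma dnorm_cs_pos:
  assumes "1 \<le> k" "\<forall>l\<in>{k..<k+m}. \<omega> l \<in> I l" "x \<in> V"
  shows "dnorm (cs \<phi> \<omega> k m) x > 0"
  using cs_conformal[OF assms] dnorm_conformal_at by auto

lemma dnorm_cs_distortion:
  assumes "1 \<le> k" "\<forall>l\<in>{k..<k+m}. \<omega> l \<in> I l" "x \<in> V" "y \<in> V"
  shows "dnorm (cs \<phi> \<omega> k m) x \<le> K * dnorm (cs \<phi> \<omega> k m) y"
proof (cases "m = 0")
  case True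
  have "dnorm id x = 1" "dnorm id y = 1" by (rule dnorm_conformal_at[OF conformal_at_id])+
  then show ?thesis using True K_ge_1 by simp
qed (use assms distortion in auto)

lemma dnorm_cs_le_Dnorm:
  assumes "1 \<le> k" "\<forall>l\<in>{k..<k+m}. \<omega> l \<in> I l" "x \<in> X"
  shows "dnorm (cs \<phi> \<omega> k m) x \<le> Dnorm X (cs \<phi> \<omega> k m)"
proof -
  obtain y where "y \<in> X" using X_nonempty by auto
  then have "bdd_above ((\<lambda>x. dnorm (cs \<phi> \<omega> k m) x) ` X)"
    using dnorm_cs_distortion[OF assms(1,2)] X_sub_V by (intro bdd_aboveI) auto
  then show ?thesis unfolding Dnorm_def using assms(3) by (rule cSUP_upper2) simp
qed

lemma Dnorm_cs_le_distortion:
  assumes "1 \<le> k" "\<forall>l\<in>{k..<k+m}. \<omega> l \<in> I l" "y \<in> V"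
  shows "Dnorm X (cs \<phi> \<omega> k m) \<le> K * dnorm (cs \<phi> \<omega> k m) y"
  unfolding Dnorm_def using X_nonempty X_sub_V dnorm_cs_distortion[OF assms(1,2) _ assms(3)]
  by (intro cSUP_least) auto

lemma Dnorm_cs_pos:
  assumes "1 \<le> k" "\<forall>l\<in>{k..<k+m}. \<omega> l \<in> I l"
  shows "Dnorm X (cs \<phi> \<omega> k m) > 0"
proof -
  obtain y where "y \<in> X" using X_nonempty by auto
  then show ?thesis
    using dnorm_cs_le_Dnorm[OF assms] dnorm_cs_pos[OF assms] X_sub_V by force
qed

lemma Dnorm_map_pos: "1 \<le> k \<Longrightarrow> i \<in> I k \<Longrightarrow> Dnorm X (\<phi> k i) > 0"
  using Dnorm_cs_pos[of k 1 "\<lambda>_. i"] by simp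

lemma dnorm_cs_fun_upd_split_at:
  assumes "k \<in> {1..n}" "\<forall>l\<in>{1..n}. \<omega> l \<in> I l" "i \<in> I k" "x \<in> V"
  defines "y \<equiv> cs \<phi> \<omega> (Suc k) (n - k) x"
  shows "dnorm (cs \<phi> (fun_upd \<omega> k i) 1 n) x =
    dnorm (cs \<phi> \<omega> 1 (k - 1)) (\<phi> k i y) * dnorm (\<phi> k i) y * dnorm (cs \<phi> \<omega> (Suc k) (n - k)) x"
proof -
  have adm_head: "\<forall>l\<in>{1..<1 + (k - 1)}. \<omega> l \<in> I l"
    and adm_tail: "\<forall>l\<in>{Suc k..<Suc k + (n - k)}. \<omega> l \<in> I l"
    and adm_k: "\<forall>l\<in>{k..<k + 1}. (\<lambda>_. i) l \<in> I l"
    using assms(1-3) by auto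
  obtain c where "y \<in> V" and c: "conformal_at (cs \<phi> \<omega> (Suc k) (n - k)) x c"
    using cs_conformal[OF _ adm_tail assms(4)] unfolding y_def by auto
  moreover obtain c' where "\<phi> k i y \<in> V" and c': "conformal_at (\<phi> k i) y c'"
    using cs_conformal[OF _ adm_k \<open>y \<in> V\<close>] assms(1) by auto
  moreover obtain c'' where c'': "conformal_at (cs \<phi> \<omega> 1 (k - 1)) (\<phi> k i y) c''"
    using cs_conformal[OF _ adm_head \<open>\<phi> k i y \<in> V\<close>] by auto
  ultimately show ?thesis
    unfolding cs_fun_upd_split_at[OF assms(1)]
    using dnorm_compose[OF c conformal_at_compose[OF c' c'', unfolded y_def]]
      dnorm_compose[OF c' c''] by (simp add: y_def del: comp_apply)
qed

lemma Dnorm_swap_letter: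
  assumes "k \<in> {1..n}" "\<forall>l\<in>{1..n}. \<omega> l \<in> I l" "i \<in> I k"
  shows "Dnorm X (cs \<phi> \<omega> 1 n) * Dnorm X (\<phi> k i)
    \<le> K\<^sup>2 * Dnorm X (\<phi> k (\<omega> k)) * Dnorm X (cs \<phi> (fun_upd \<omega> k i) 1 n)"
proof -
  let ?\<omega>' = "fun_upd \<omega> k i" and ?p = "\<phi> k (\<omega> k)" and ?p' = "\<phi> k i"
    and ?A = "cs \<phi> \<omega> 1 (k - 1)" and ?B = "cs \<phi> \<omega> (Suc k) (n - k)"
  have k: "1 \<le> k" "\<omega> k \<in> I k" using assms(1,2) by auto
  have adm': "\<forall>l\<in>{1..<1 + n}. ?\<omega>' l \<in> I l"
    and adm_head: "\<forall>l\<in>{1..<1 + (k - 1)}. \<omega> l \<in> I l"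
    and adm_tail: "\<forall>l\<in>{Suc k..<Suc k + (n - k)}. \<omega> l \<in> I l"
    using assms by auto
  have "dnorm (cs \<phi> \<omega> 1 n) x \<le> K\<^sup>2 * Dnorm X ?p * Dnorm X (cs \<phi> ?\<omega>' 1 n) / Dnorm X ?p'"
    if "x \<in> X" for x
  proof -
    define y where "y = ?B x"
    have "x \<in> V" "y \<in> X" "y \<in> V"
      using that X_sub_V cs_maps_X[OF _ adm_tail that] unfolding y_def by auto
    have "?p y \<in> X" "?p' y \<in> X" using maps_X k assms(3) \<open>y \<in> X\<close> by auto
    have split: "dnorm (cs \<phi> \<omega> 1 n) x = dnorm ?A (?p y) * dnorm ?p y * dnorm ?B x"
      using dnorm_cs_fun_upd_split_at[OF assms(1,2) k(2) \<open>x \<in> V\<close>] unfolding y_def by simp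
    have split': "dnorm (cs \<phi> ?\<omega>' 1 n) x = dnorm ?A (?p' y) * dnorm ?p' y * dnorm ?B x"
      using dnorm_cs_fun_upd_split_at[OF assms \<open>x \<in> V\<close>] unfolding y_def .
    have "dnorm ?A (?p y) \<le> K * dnorm ?A (?p' y)"
      using dnorm_cs_distortion[OF _ adm_head] \<open>?p y \<in> X\<close> \<open>?p' y \<in> X\<close> X_sub_V by auto
    moreover have "dnorm ?p y \<le> Dnorm X ?p"
      using dnorm_cs_le_Dnorm[of k 1 "\<lambda>_. \<omega> k" y] k \<open>y \<in> X\<close> by simp
    moreover have "Dnorm X ?p' \<le> K * dnorm ?p' y"
      using Dnorm_cs_le_distortion[of k 1 "\<lambda>_. i" y] k assms(3) \<open>y \<in> V\<close> by simp
    moreover have "0 < dnorm ?A (?p y)" "0 < dnorm ?p y" "0 < dnorm ?A (?p' y)"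
      "0 < dnorm ?B x" "0 < Dnorm X ?p'"
      using dnorm_cs_pos[OF _ adm_head] dnorm_cs_pos[of k 1 "\<lambda>_. \<omega> k" y]
        dnorm_cs_pos[OF _ adm_tail \<open>x \<in> V\<close>] Dnorm_map_pos[OF k(1) assms(3)]
        \<open>?p y \<in> X\<close> \<open>?p' y \<in> X\<close> \<open>y \<in> V\<close> X_sub_V k by auto
    ultimately have "dnorm (cs \<phi> \<omega> 1 n) x * Dnorm X ?p'
        \<le> (K * dnorm ?A (?p' y)) * Dnorm X ?p * dnorm ?B x * (K * dnorm ?p' y)"
      unfolding split using K_ge_1 by (intro mult_mono) auto
    also have "\<dots> = K\<^sup>2 * Dnorm X ?p * dnorm (cs \<phi> ?\<omega>' 1 n) x"
      unfolding split' by (simp add: power2_eq_square algebra_simps)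
    also have "\<dots> \<le> K\<^sup>2 * Dnorm X ?p * Dnorm X (cs \<phi> ?\<omega>' 1 n)"
      using Dnorm_map_pos[OF k] by (intro mult_left_mono dnorm_cs_le_Dnorm[OF _ adm' that]) auto
    finally show ?thesis using \<open>0 < Dnorm X ?p'\<close> by (simp add: pos_le_divide_eq)
  qed
  then have "Dnorm X (cs \<phi> \<omega> 1 n) \<le> K\<^sup>2 * Dnorm X ?p * Dnorm X (cs \<phi> ?\<omega>' 1 n) / Dnorm X ?p'"
    unfolding Dnorm_def[of X "cs \<phi> \<omega> 1 n"] using X_nonempty by (intro cSUP_least) auto
  then show ?thesis using Dnorm_map_pos[OF k(1) assms(3)] by (simp add: pos_le_divide_eq)
qed

end

locale truncated_system = bounded_distortion_system X V I \<phi> K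
  for X V :: "'a::euclidean_space set" and I :: "nat \<Rightarrow> nat set"
    and \<phi> :: "nat \<Rightarrow> nat \<Rightarrow> 'a \<Rightarrow> 'a" and K :: real +
  fixes I\<^sub>f :: "nat \<Rightarrow> nat set" and t :: real
  assumes t_nonneg: "0 \<le> t"
    and finite_subsystem: "\<And>j. 1 \<le> j \<Longrightarrow> finite (I\<^sub>f j) \<and> I\<^sub>f j \<subseteq> I j \<and> I\<^sub>f j \<noteq> {}"
    and summable_letters: "\<And>j. 1 \<le> j \<Longrightarrow> (\<lambda>i. Dnorm X (\<phi> j i) powr t) summable_on I j"
begin

definition word_weight :: "nat \<Rightarrow> (nat \<Rightarrow> nat) \<Rightarrow> ennreal" where
  "word_weight n \<omega> = ennreal (Dnorm X (cs \<phi> \<omega> 1 n) powr t)"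

definition letter_weight :: "nat \<Rightarrow> nat \<Rightarrow> ennreal" where
  "letter_weight k i = ennreal (Dnorm X (\<phi> k i) powr t)"

definition truncated_letters :: "nat \<Rightarrow> nat \<Rightarrow> nat set" where
  "truncated_letters k j = (if j \<le> k then I\<^sub>f j else I j)"

definition Z_truncated :: "nat \<Rightarrow> nat \<Rightarrow> ennreal" where
  "Z_truncated n k = infsum (word_weight n) (PiE {1..n} (truncated_letters k))"

definition head_sum :: "nat \<Rightarrow> real" where
  "head_sum k = (\<Sum>i\<in>I\<^sub>f k. Dnorm X (\<phi> k i) powr t)"

definition tail_sum :: "nat \<Rightarrow> real" where
  "tail_sum k = (\<Sum>\<^sub>\<infinity>i\<in>I k - I\<^sub>f k. Dnorm X (\<phi> k i) powr t)"

definition distortion_factor :: real where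
  "distortion_factor = (K\<^sup>2) powr t"

definition loss_factor :: "nat \<Rightarrow> real" where
  "loss_factor k = 1 + distortion_factor * tail_sum k / head_sum k"

lemma head_sum_pos: "1 \<le> k \<Longrightarrow> head_sum k > 0"
  unfolding head_sum_def using finite_subsystem Dnorm_map_pos by (intro sum_pos) force+

lemma tail_sum_nonneg: "tail_sum k \<ge> 0"
  unfolding tail_sum_def by (rule infsum_nonneg) simp

lemma infsum_letter_weight_tail:
  "1 \<le> k \<Longrightarrow> infsum (letter_weight k) (I k - I\<^sub>f k) = ennreal (tail_sum k)"
  unfolding letter_weight_def tail_sum_def
  by (intro infsum_ennreal_of_real summable_on_subset_banach[OF summable_letters]) auto

lemma distortion_factor_pos: "distortion_factor > 0"
  unfolding distortion_factor_def using K_ge_1 by simp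

lemma distortion_factor_le:
  assumes "t \<le> real DIM('a)"
  shows "distortion_factor \<le> K ^ (2 * DIM('a))"
proof -
  have "distortion_factor \<le> (K\<^sup>2) powr real DIM('a)"
    unfolding distortion_factor_def using K_ge_1 assms by (intro powr_mono) auto
  also have "\<dots> = K ^ (2 * DIM('a))"
    using K_ge_1 by (simp add: powr_realpow power_mult)
  finally show ?thesis .
qed

lemma loss_factor_ge_1: "1 \<le> k \<Longrightarrow> loss_factor k \<ge> 1"
  unfolding loss_factor_def using distortion_factor_pos tail_sum_nonneg[of k] head_sum_pos[of k]
  by simp

lemma loss_factor_le:
  assumes "1 \<le> k" "(\<Sum>\<^sub>\<infinity>j\<in>I k. Dnorm X (\<phi> k j) powr t) \<le> (1 + \<delta>) * head_sum k"
  shows "loss_factor k \<le> 1 + distortion_factor * \<delta>"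
proof -
  have "I k = I\<^sub>f k \<union> (I k - I\<^sub>f k)" using finite_subsystem[OF assms(1)] by auto
  then have "(\<Sum>\<^sub>\<infinity>j\<in>I k. Dnorm X (\<phi> k j) powr t) = head_sum k + tail_sum k"
    unfolding head_sum_def tail_sum_def using finite_subsystem[OF assms(1)]
    by (metis Diff_disjoint infsum_Un_disjoint infsum_finite summable_on_finite
        summable_letters[OF assms(1)] summable_on_subset_banach Diff_subset)
  then have "tail_sum k / head_sum k \<le> \<delta>"
    using assms(2) head_sum_pos[OF assms(1)] by (simp add: divide_le_eq algebra_simps)
  then show ?thesis
    unfolding loss_factor_def using distortion_factor_pos
    by (simp add: mult_left_mono times_divide_eq_right[symmetric] del: times_divide_eq_right)
qed

lemma word_weight_swap_letter:
  assumes "k \<in> {1..n}" "\<forall>l\<in>{1..n}. \<omega> l \<in> I l" "i \<in> I k"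
  shows "word_weight n \<omega> * letter_weight k i
    \<le> ennreal distortion_factor * (letter_weight k (\<omega> k) * word_weight n (fun_upd \<omega> k i))"
proof -
  let ?A = "Dnorm X (cs \<phi> \<omega> 1 n)" and ?B = "Dnorm X (\<phi> k i)"
    and ?C = "Dnorm X (\<phi> k (\<omega> k))" and ?D = "Dnorm X (cs \<phi> (fun_upd \<omega> k i) 1 n)"
  have "?A > 0" "?B > 0" "?C > 0" "?D > 0"
    using assms Dnorm_cs_pos[of 1 n \<omega>] Dnorm_cs_pos[of 1 n "fun_upd \<omega> k i"] Dnorm_map_pos
    by auto
  moreover have "(?A * ?B) powr t \<le> (K\<^sup>2 * ?C * ?D) powr t"
    using Dnorm_swap_letter[OF assms] \<open>?A > 0\<close> \<open>?B > 0\<close> t_nonneg by (intro powr_mono2) auto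
  ultimately have "?A powr t * ?B powr t \<le> distortion_factor * (?C powr t * ?D powr t)"
    unfolding distortion_factor_def using K_ge_1 by (simp add: powr_mult mult.assoc)
  then show ?thesis
    unfolding word_weight_def letter_weight_def using distortion_factor_pos
    by (simp add: ennreal_mult[symmetric] ennreal_leI)
qed

lemma truncated_letters_sub: "1 \<le> j \<Longrightarrow> truncated_letters k j \<subseteq> I j"
  unfolding truncated_letters_def using finite_subsystem by auto

lemma truncated_words_Suc:
  assumes "k \<in> {1..n}"
  shows "PiE {1..n} (truncated_letters k)
    = {\<omega> \<in> PiE {1..n} (truncated_letters (k - 1)). \<omega> k \<in> I\<^sub>f k}"
proof -
  have "truncated_letters k = (truncated_letters (k - 1))(k := I\<^sub>f k)"
    unfolding truncated_letters_def by (rule ext) auto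
  then show ?thesis
    using assms finite_subsystem by (simp add: PiE_fun_upd_restrict truncated_letters_def)
qed

lemma Z_truncated_0: "Z_truncated n 0 = Zn X I \<phi> t n"
proof -
  have "PiE {1..n} (truncated_letters 0) = words I n"
    unfolding words_def truncated_letters_def by (rule PiE_cong) auto
  then show ?thesis unfolding Z_truncated_def Zn_def word_weight_def by simp
qed

lemma Z_truncated_self: "Z_truncated n n = Zn X I\<^sub>f \<phi> t n"
proof -
  have "PiE {1..n} (truncated_letters n) = words I\<^sub>f n"
    unfolding words_def truncated_letters_def by (rule PiE_cong) auto
  then show ?thesis unfolding Z_truncated_def Zn_def word_weight_def by simp
qed

lemma sum_bad_words_le:
  assumes "k \<in> {1..n}" "finite F"
    and "F \<subseteq> {\<omega> \<in> PiE {1..n} (truncated_letters (k - 1)). \<omega> k \<notin> I\<^sub>f k}"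
  shows "sum (word_weight n) F * ennreal (head_sum k)
    \<le> ennreal distortion_factor * (ennreal (tail_sum k) * Z_truncated n k)"
proof -
  let ?w = "word_weight n" and ?h = "letter_weight k" and ?If = "I\<^sub>f k"
  define T where "T = (\<lambda>(\<omega>::nat \<Rightarrow> nat, i::nat). (\<omega> k, fun_upd \<omega> k i))"
  define P where "P = T ` (F \<times> ?If)"
  have k: "1 \<le> k" and fin: "finite ?If" "finite P" and sub: "?If \<subseteq> I k"
    using assms(1,2) finite_subsystem[of k] unfolding P_def by auto
  have inj_T: "inj_on T (F \<times> ?If)"
    unfolding T_def using inj_letter_swap[of k] by (rule inj_on_subset) simp
  have adm: "\<forall>l\<in>{1..n}. \<omega> l \<in> I l" if "\<omega> \<in> F" for \<omega>
    using that assms(3) truncated_letters_sub by (force simp: PiE_iff)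
  have fst_P: "fst ` P \<subseteq> I k - ?If"
    unfolding P_def T_def using assms(1,3) adm by auto
  have upd: "fun_upd \<omega> k i \<in> PiE {1..n} (truncated_letters k)" if "\<omega> \<in> F" "i \<in> ?If" for \<omega> i
  proof -
    have "i \<in> truncated_letters (k - 1) k" using that(2) sub unfolding truncated_letters_def by auto
    then have "fun_upd \<omega> k i \<in> PiE (insert k {1..n}) (truncated_letters (k - 1))"
      using that(1) assms(3) by (intro PiE_fun_upd) auto
    then show ?thesis
      unfolding truncated_words_Suc[OF assms(1)] using assms(1) that(2) by (simp add: insert_absorb)
  qed
  have snd_P: "snd ` P \<subseteq> PiE {1..n} (truncated_letters k)"
  proof
    fix v assume "v \<in> snd ` P"
    then obtain \<omega> i where "\<omega> \<in> F" "i \<in> ?If" "v = fun_upd \<omega> k i"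
      unfolding P_def T_def by auto
    then show "v \<in> PiE {1..n} (truncated_letters k)" using upd by simp
  qed
  have sums_le: "sum ?h (fst ` P) \<le> ennreal (tail_sum k)"
    "sum ?w (snd ` P) \<le> Z_truncated n k"
    using fin fst_P snd_P infsum_letter_weight_tail[OF k]
    unfolding Z_truncated_def by (metis sum_le_infsum_ennreal finite_imageI)+
  have "ennreal (head_sum k) = sum ?h ?If"
    unfolding head_sum_def letter_weight_def by (rule sum_ennreal[symmetric]) simp
  then have "sum ?w F * ennreal (head_sum k) = (\<Sum>\<omega>\<in>F. \<Sum>i\<in>?If. ?w \<omega> * ?h i)"
    by (simp add: sum_distrib_left sum_distrib_right sum.swap[of _ ?If])
  also have "\<dots> \<le> (\<Sum>\<omega>\<in>F. \<Sum>i\<in>?If. ennreal distortion_factor * (?h (\<omega> k) * ?w (fun_upd \<omega> k i)))"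
    using word_weight_swap_letter[OF assms(1) adm] sub by (intro sum_mono) auto
  also have "\<dots> = ennreal distortion_factor * (\<Sum>q\<in>F \<times> ?If. ?h (fst (T q)) * ?w (snd (T q)))"
    by (simp add: T_def sum.cartesian_product sum_distrib_left case_prod_beta)
  also have "\<dots> = ennreal distortion_factor * (\<Sum>q\<in>P. ?h (fst q) * ?w (snd q))"
    unfolding P_def sum.reindex[OF inj_T] by (simp add: o_def)
  also have "\<dots> \<le> ennreal distortion_factor * (\<Sum>q\<in>fst ` P \<times> snd ` P. ?h (fst q) * ?w (snd q))"
    using fin by (intro mult_left_mono sum_mono2) (auto intro: rev_image_eqI)
  also have "\<dots> = ennreal distortion_factor * (sum ?h (fst ` P) * sum ?w (snd ` P))"
    by (simp add: sum_product sum.cartesian_product case_prod_beta)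
  also have "\<dots> \<le> ennreal distortion_factor * (ennreal (tail_sum k) * Z_truncated n k)"
    using sums_le by (intro mult_left_mono mult_mono) auto
  finally show ?thesis .
qed

lemma Z_truncated_step:
  assumes "k \<in> {1..n}"
  shows "Z_truncated n (k - 1) \<le> ennreal (loss_factor k) * Z_truncated n k"
proof -
  let ?w = "word_weight n"
  define B where "B = {\<omega> \<in> PiE {1..n} (truncated_letters (k - 1)). \<omega> k \<notin> I\<^sub>f k}"
  define c where "c = distortion_factor * tail_sum k / head_sum k"
  have head: "head_sum k > 0" using assms head_sum_pos by simp
  then have c_nonneg: "c \<ge> 0"
    using distortion_factor_pos tail_sum_nonneg[of k] unfolding c_def by simp
  have words: "PiE {1..n} (truncated_letters (k - 1)) = PiE {1..n} (truncated_letters k) \<union> B"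
    "PiE {1..n} (truncated_letters k) \<inter> B = {}"
    unfolding truncated_words_Suc[OF assms] B_def by auto
  have split: "Z_truncated n (k - 1) = Z_truncated n k + infsum ?w B"
    unfolding Z_truncated_def words(1)
    by (rule infsum_Un_disjoint) (use words(2) in \<open>auto intro: nonneg_summable_on_complete\<close>)
  have "infsum ?w B \<le> ennreal c * Z_truncated n k"
  proof (rule infsum_ennreal_le)
    fix F assume "finite F" "F \<subseteq> B"
    have "sum ?w F = sum ?w F * ennreal (head_sum k) * ennreal (1 / head_sum k)"
      using head by (simp add: mult.assoc ennreal_mult[symmetric])
    also have "\<dots> \<le> ennreal distortion_factor * (ennreal (tail_sum k) * Z_truncated n k)
        * ennreal (1 / head_sum k)"
      using sum_bad_words_le[OF assms \<open>finite F\<close> \<open>F \<subseteq> B\<close>[unfolded B_def]] by (rule mult_right_mono) simp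
    also have "\<dots> = ennreal c * Z_truncated n k"
      unfolding c_def using head distortion_factor_pos tail_sum_nonneg[of k]
      by (simp add: ennreal_mult divide_inverse mult_ac)
    finally show "sum ?w F \<le> ennreal c * Z_truncated n k" .
  qed
  then have "Z_truncated n (k - 1) \<le> Z_truncated n k + ennreal c * Z_truncated n k"
    unfolding split by (rule add_left_mono)
  also have "\<dots> = ennreal (loss_factor k) * Z_truncated n k"
    unfolding loss_factor_def c_def[symmetric] using c_nonneg
    by (simp add: ennreal_plus[symmetric] distrib_right)
  finally show ?thesis .
qed

lemma Zn_le_prod_loss_factor:
  "Zn X I \<phi> t n \<le> ennreal (\<Prod>k\<in>{1..n}. loss_factor k) * Zn X I\<^sub>f \<phi> t n"
proof -
  have "Z_truncated n 0 \<le> ennreal (\<Prod>k\<in>{1..m}. loss_factor k) * Z_truncated n m" if "m \<le> n" for m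
    using that
  proof (induction m)
    case (Suc m)
    have prod_nonneg: "(\<Prod>k\<in>{1..m}. loss_factor k) \<ge> 0"
      using loss_factor_ge_1 by (intro prod_nonneg) (auto intro: order_trans[OF zero_le_one])
    have "Z_truncated n 0 \<le> ennreal (\<Prod>k\<in>{1..m}. loss_factor k) * Z_truncated n m"
      using Suc by simp
    also have "\<dots> \<le> ennreal (\<Prod>k\<in>{1..m}. loss_factor k)
        * (ennreal (loss_factor (Suc m)) * Z_truncated n (Suc m))"
      using Z_truncated_step[of "Suc m" n] Suc.prems by (intro mult_left_mono) auto
    also have "\<dots> = ennreal (\<Prod>k\<in>{1..Suc m}. loss_factor k) * Z_truncated n (Suc m)"
      using prod_nonneg loss_factor_ge_1[of "Suc m"]
      by (simp add: prod.nat_ivl_Suc' ennreal_mult mult_ac)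
    finally show ?case .
  qed simp
  from this[of n] show ?thesis by (simp add: Z_truncated_0 Z_truncated_self)
qed

lemma Zn_subsystem_eq_ennreal: "\<exists>z>0. Zn X I\<^sub>f \<phi> t n = ennreal z"
proof (intro exI conjI)
  have fin: "finite (words I\<^sub>f n)" and ne: "words I\<^sub>f n \<noteq> {}"
    unfolding words_def using finite_subsystem by (auto intro!: finite_PiE simp: PiE_eq_empty_iff)
  have "Dnorm X (cs \<phi> \<omega> 1 n) powr t > 0" if "\<omega> \<in> words I\<^sub>f n" for \<omega>
  proof -
    have "Dnorm X (cs \<phi> \<omega> 1 n) > 0"
      using that finite_subsystem by (intro Dnorm_cs_pos) (force simp: words_def PiE_iff)+
    then show ?thesis by simp
  qed
  then show "(\<Sum>\<omega>\<in>words I\<^sub>f n. Dnorm X (cs \<phi> \<omega> 1 n) powr t) > 0"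
    using fin ne by (intro sum_pos) auto
  show "Zn X I\<^sub>f \<phi> t n = ennreal (\<Sum>\<omega>\<in>words I\<^sub>f n. Dnorm X (cs \<phi> \<omega> 1 n) powr t)"
    unfolding Zn_def using fin by simp
qed

lemma lower_pressure_le_add_ln:
  assumes "q > 0" and "eventually (\<lambda>k. loss_factor k \<le> q) sequentially"
  shows "lower_pressure X I \<phi> t \<le> ereal (ln q) + lower_pressure X I\<^sub>f \<phi> t"
proof -
  obtain C where "C > 0" and C: "\<And>n. (\<Prod>k\<in>{1..n}. loss_factor k) \<le> C * q ^ n"
    using prod_le_const_mult_power[of loss_factor q] loss_factor_ge_1 assms(2) by blast
  have "\<exists>z. \<forall>n. z n > 0 \<and> Zn X I\<^sub>f \<phi> t n = ennreal (z n)"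
    using Zn_subsystem_eq_ennreal by (intro choice allI) blast
  then obtain z where z_pos: "\<And>n. z n > 0" and z: "\<And>n. Zn X I\<^sub>f \<phi> t n = ennreal (z n)"
    by blast
  have "Zn X I \<phi> t n \<le> ennreal (C * q ^ n * z n)" for n
  proof -
    have "Zn X I \<phi> t n \<le> ennreal (\<Prod>k\<in>{1..n}. loss_factor k) * ennreal (z n)"
      using Zn_le_prod_loss_factor[of n] unfolding z .
    also have "\<dots> \<le> ennreal (C * q ^ n) * ennreal (z n)"
      by (intro mult_right_mono ennreal_leI C) simp
    also have "\<dots> = ennreal (C * q ^ n * z n)"
      using \<open>C > 0\<close> \<open>q > 0\<close> z_pos[of n] by (simp add: ennreal_mult)
    finally show ?thesis .
  qed
  then show ?thesis
    unfolding lower_pressure_def z using z_pos \<open>C > 0\<close> \<open>q > 0\<close>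
    by (intro liminf_eln_le_geometric) auto
qed

lemma ln_one_plus_distortion_le:
  assumes "0 \<le> \<delta>" and "t \<le> real DIM('a)"
  shows "ln (1 + distortion_factor * \<delta>) \<le> \<delta> * K ^ (2 * DIM('a))"
proof -
  have "ln (1 + distortion_factor * \<delta>) \<le> distortion_factor * \<delta>"
    using distortion_factor_pos assms(1) by (intro ln_add_one_self_le_self) simp
  also have "\<dots> \<le> \<delta> * K ^ (2 * DIM('a))"
    using distortion_factor_le[OF assms(2)] assms(1) by (simp add: mult.commute mult_left_mono)
  finally show ?thesis .
qed

end

theorem proposition5p1:
  fixes X :: "'a::euclidean_space set" and I I\<^sub>f :: "nat \<Rightarrow> nat set"
    and \<phi> :: "nat \<Rightarrow> nat \<Rightarrow> 'a \<Rightarrow> 'a" and K t \<delta> :: real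
  assumes "NCIFS X I \<phi> K"
    and "0 \<le> t" and "t \<le> real DIM('a)"
    and "\<forall>n\<ge>1. (\<lambda>j. Dnorm X (\<phi> n j) powr t) summable_on I n"
    and "\<delta> > 0"
    and "\<forall>n\<ge>1. finite (I\<^sub>f n) \<and> I\<^sub>f n \<subseteq> I n \<and> I\<^sub>f n \<noteq> {}"
    and "eventually (\<lambda>n. (\<Sum>\<^sub>\<infinity>j\<in>I n. Dnorm X (\<phi> n j) powr t)
                         \<le> (1 + \<delta>) * (\<Sum>j\<in>I\<^sub>f n. Dnorm X (\<phi> n j) powr t)) sequentially"
  shows "lower_pressure X I\<^sub>f \<phi> t \<ge> lower_pressure X I \<phi> t - ereal (\<delta> * K ^ (2 * DIM('a)))"
proof -
  obtain V where "bounded_distortion_system X V I \<phi> K"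
    using NCIFS_imp_bounded_distortion_system[OF assms(1)] .
  then interpret bounded_distortion_system X V I \<phi> K .
  interpret truncated_system X V I \<phi> K I\<^sub>f t
    by unfold_locales (use assms(2,4,6) in auto)
  define q where "q = 1 + distortion_factor * \<delta>"
  have "q > 0"
    unfolding q_def using distortion_factor_pos assms(5) by (intro add_pos_pos mult_pos_pos) simp_all
  have "eventually (\<lambda>k. loss_factor k \<le> q) sequentially"
    using assms(7) eventually_ge_at_top[of 1]
    by eventually_elim (simp add: loss_factor_le head_sum_def q_def)
  then have "lower_pressure X I \<phi> t \<le> ereal (ln q) + lower_pressure X I\<^sub>f \<phi> t"
    by (rule lower_pressure_le_add_ln[OF \<open>q > 0\<close>])
  also have "\<dots> \<le> ereal (\<delta> * K ^ (2 * DIM('a))) + lower_pressure X I\<^sub>f \<phi> t"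
    unfolding q_def using ln_one_plus_distortion_le assms(3,5) by (intro add_right_mono) simp
  finally show ?thesis by (simp add: ereal_minus_le add.commute)
qed

end
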